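(* Assume complete randomization, let $\mathcal Q_{\mathrm U}=\{q:N_q=1\}$ with $N_{\mathrm U}=|\mathcal Q_{\mathrm U}|$, and let $\{\langle g\rangle\}_{g=1}^G$ be a grouping of $\mathcal Q_{\mathrm U}$. Assume Conditions 3 and 6. Let $(w_q)_{q\in\mathcal Q_{\mathrm U}}$ be reals with $\max_q|w_q|\le\overline w$ and $\hat v=\sum_{g=1}^G\sum_{q\in\langle g\rangle}w_q(Y_q-\hat Y_{\langle g\rangle})^2$. There is a universal constant $C>0$ such that for all $t>0$, $$\mathbb P\{|\hat v-\mathbb E\hat v|\ge t\}\le\frac{C\overline w^2(\Delta^4+\Delta^2\zeta^2)N_{\mathrm U}}{t^2}.$$
   Context: Randomization model: $N$ units, $Q$ treatment levels, group sizes $N_1,\dots,N_Q\ge1$ with $\sum_qN_q=N$; unit $i$ has fixed real potential outcomes $Y_i(q)$. Under complete randomization $Z$ is uniform over all vectors in $[Q]^N$ with exactly $N_q$ coordinates equal to $q$; $Y_i=Y_i(Z_i)$. For $q$ with $N_q=1$, $Y_q$ denotes the observed outcome of the unit assigned to $q$. $\overline Y(q)=N^{-1}\sum_iY_i(q)$. Grouping: a fixed (data-independent) partition $\mathcal Q_{\mathrm U}=\bigcup_{g=1}^G\langle g\rangle$ into disjoint groups with $|\langle g\rangle|\ge2$; $\hat Y_{\langle g\rangle}=|\langle g\rangle|^{-1}\sum_{q\in\langle g\rangle}Y_q$, $\overline Y_{\langle g\rangle}=|\langle g\rangle|^{-1}\sum_{q\in\langle g\rangle}\overline Y(q)$. Condition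 3: $\max_qN^{-1}\sum_i\{Y_i(q)-\overline Y(q)\}^4\le\Delta^4$. Condition 6: $\max_g\max_{q\in\langle g\rangle}|\overline Y(q)-\overline Y_{\langle g\rangle}|\le\zeta$. *)

theory Defs
  imports "HOL-Analysis.Analysis"
begin

text \<open>Units are 0..<N, treatment levels are 0..<Q. Potential outcomes Y i q.
  Complete randomization: Z uniform over assignments with exactly Nq q units at level q.\<close>

definition assignments :: "nat \<Rightarrow> nat \<Rightarrow> (nat \<Rightarrow> nat) \<Rightarrow> (nat \<Rightarrow> nat) set" where
  "assignments N Q Nq = {z \<in> {..<N} \<rightarrow>\<^sub>E {..<Q}. \<forall>q<Q. card {i\<in>{..<N}. z i = q} = Nq q}"

definition prob_cr :: "nat \<Rightarrow> nat \<Rightarrow> (nat \<Rightarrow> nat) \<Rightarrow> ((nat \<Rightarrow> nat) \<Rightarrow> bool) \<Rightarrow> real" where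
  "prob_cr N Q Nq E = real (card {z \<in> assignments N Q Nq. E z}) / real (card (assignments N Q Nq))"

definition expect_cr :: "nat \<Rightarrow> nat \<Rightarrow> (nat \<Rightarrow> nat) \<Rightarrow> ((nat \<Rightarrow> nat) \<Rightarrow> real) \<Rightarrow> real" where
  "expect_cr N Q Nq f = (\<Sum>z\<in>assignments N Q Nq. f z) / real (card (assignments N Q Nq))"

definition QU :: "nat \<Rightarrow> (nat \<Rightarrow> nat) \<Rightarrow> nat set" where
  "QU Q Nq = {q. q < Q \<and> Nq q = 1}"

definition Yobs :: "nat \<Rightarrow> (nat \<Rightarrow> nat \<Rightarrow> real) \<Rightarrow> (nat \<Rightarrow> nat) \<Rightarrow> nat \<Rightarrow> real" where
  "Yobs N Y z q = Y (THE i. i < N \<and> z i = q) q"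

definition Yhat_grp :: "nat \<Rightarrow> (nat \<Rightarrow> nat \<Rightarrow> real) \<Rightarrow> (nat \<Rightarrow> nat) \<Rightarrow> nat set \<Rightarrow> real" where
  "Yhat_grp N Y z A = (\<Sum>q\<in>A. Yobs N Y z q) / real (card A)"

definition vhat :: "nat \<Rightarrow> (nat \<Rightarrow> nat \<Rightarrow> real) \<Rightarrow> nat \<Rightarrow> (nat \<Rightarrow> nat set) \<Rightarrow> (nat \<Rightarrow> real)
    \<Rightarrow> (nat \<Rightarrow> nat) \<Rightarrow> real" where
  "vhat N Y G grp w z = (\<Sum>g<G. \<Sum>q\<in>grp g. w q * (Yobs N Y z q - Yhat_grp N Y z (grp g))^2)"

definition Ybar :: "nat \<Rightarrow> (nat \<Rightarrow> nat \<Rightarrow> real) \<Rightarrow> nat \<Rightarrow> real" where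
  "Ybar N Y q = (\<Sum>i<N. Y i q) / real N"

definition Ybar_grp :: "nat \<Rightarrow> (nat \<Rightarrow> nat \<Rightarrow> real) \<Rightarrow> nat set \<Rightarrow> real" where
  "Ybar_grp N Y A = (\<Sum>q\<in>A. Ybar N Y q) / real (card A)"

end

theory Submission
  imports Defs "HOL-Combinatorics.Permutations"
begin

text \<open>Let Z r be the observed outcome at singleton level r minus the group average of the Ybar
  values. The estimator is the quadratic form vhat = \<Sum>r s. B r s * Z r * Z s with a block-diagonal
  coefficient matrix whose absolute row sums are at most 4 wbar, so its variance is
  \<Sum>r s t u. B r s * B t u * Cov (Z r * Z s, Z t * Z u). Conditions 3 and 6 bound every such
  covariance by a multiple of M = \<Delta>^4 + \<Delta>^2 \<zeta>^2. When {r, s} and {t, u} are disjoint the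
  bound improves to O(M / N): the units at the four levels are drawn without replacement, which
  differs from independent draws of the two pairs only on a fraction O(1/N) of the outcomes.
  Summing, the variance is O(wbar^2 M N_U), and Chebyshev's inequality gives the claim.\<close>

section \<open>Expectation and covariance under complete randomization\<close>

lemma finite_assignments: "finite (assignments N Q Nq)"
  unfolding assignments_def by (rule finite_subset[of _ "{..<N} \<rightarrow>\<^sub>E {..<Q}"]) (auto simp: finite_PiE)

lemma expect_cr_add: "expect_cr N Q Nq (\<lambda>z. f z + g z) = expect_cr N Q Nq f + expect_cr N Q Nq g"
  unfolding expect_cr_def by (simp add: sum.distrib add_divide_distrib)

lemma expect_cr_diff: "expect_cr N Q Nq (\<lambda>z. f z - g z) = expect_cr N Q Nq f - expect_cr N Q Nq g"
  unfolding expect_cr_def by (simp add: sum_subtractf diff_divide_distrib)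

lemma expect_cr_cmult: "expect_cr N Q Nq (\<lambda>z. c * f z) = c * expect_cr N Q Nq f"
  unfolding expect_cr_def by (simp add: sum_distrib_left)

lemma expect_cr_divide: "expect_cr N Q Nq (\<lambda>z. f z / c) = expect_cr N Q Nq f / c"
  unfolding expect_cr_def by (simp add: sum_divide_distrib mult.commute)

lemma expect_cr_sum:
  "finite I \<Longrightarrow> expect_cr N Q Nq (\<lambda>z. \<Sum>i\<in>I. f i z) = (\<Sum>i\<in>I. expect_cr N Q Nq (f i))"
  unfolding expect_cr_def by (simp add: sum.swap[of _ I] sum_divide_distrib)

lemma expect_cr_const: "assignments N Q Nq \<noteq> {} \<Longrightarrow> expect_cr N Q Nq (\<lambda>z. c) = c"
  unfolding expect_cr_def using finite_assignments[of N Q Nq] by simp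

lemma expect_cr_mono:
  "(\<And>z. z \<in> assignments N Q Nq \<Longrightarrow> f z \<le> g z) \<Longrightarrow> expect_cr N Q Nq f \<le> expect_cr N Q Nq g"
  unfolding expect_cr_def by (intro divide_right_mono sum_mono) auto

lemma expect_cr_nonneg: "(\<And>z. 0 \<le> f z) \<Longrightarrow> 0 \<le> expect_cr N Q Nq f"
  unfolding expect_cr_def by (simp add: sum_nonneg)

lemma expect_cr_cong:
  "(\<And>z. z \<in> assignments N Q Nq \<Longrightarrow> f z = g z) \<Longrightarrow> expect_cr N Q Nq f = expect_cr N Q Nq g"
  unfolding expect_cr_def by (simp cong: sum.cong)

lemma abs_expect_cr_le: "\<bar>expect_cr N Q Nq f\<bar> \<le> expect_cr N Q Nq (\<lambda>z. \<bar>f z\<bar>)"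
  unfolding expect_cr_def by (simp add: divide_right_mono sum_abs)

lemma abs_mult_le_half_sum_squares: "\<bar>a * b\<bar> \<le> (a^2 + b^2) / 2" for a b :: real
  using sum_squares_bound[of "\<bar>a\<bar>" "\<bar>b\<bar>"] by (simp add: abs_mult)

definition cov_cr :: "nat \<Rightarrow> nat \<Rightarrow> (nat \<Rightarrow> nat) \<Rightarrow> ((nat \<Rightarrow> nat) \<Rightarrow> real) \<Rightarrow> ((nat \<Rightarrow> nat) \<Rightarrow> real) \<Rightarrow> real"
  where "cov_cr N Q Nq f g =
    expect_cr N Q Nq (\<lambda>z. (f z - expect_cr N Q Nq f) * (g z - expect_cr N Q Nq g))"

lemma cov_cr_self_nonneg: "0 \<le> cov_cr N Q Nq f f"
  unfolding cov_cr_def by (rule expect_cr_nonneg) simp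

lemma cov_cr_self_le:
  assumes "assignments N Q Nq \<noteq> {}"
  shows "cov_cr N Q Nq f f \<le> expect_cr N Q Nq (\<lambda>z. (f z - c)^2)"
proof -
  let ?E = "expect_cr N Q Nq"
  define m where "m = ?E f"
  have "?E (\<lambda>z. (f z - c)^2) = ?E (\<lambda>z. (f z - m)^2 + 2 * (m - c) * f z + (c^2 - m^2))"
    by (rule expect_cr_cong) (simp add: power2_eq_square algebra_simps)
  also have "\<dots> = ?E (\<lambda>z. (f z - m)^2) + 2 * (m - c) * m + (c^2 - m^2)"
    by (simp add: expect_cr_add expect_cr_cmult expect_cr_const[OF assms] m_def)
  also have "\<dots> = cov_cr N Q Nq f f + (m - c)^2"
    by (simp add: cov_cr_def m_def power2_eq_square algebra_simps)
  finally show ?thesis by simp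
qed

lemma abs_cov_cr_le: "\<bar>cov_cr N Q Nq f g\<bar> \<le> (cov_cr N Q Nq f f + cov_cr N Q Nq g g) / 2"
proof -
  let ?E = "expect_cr N Q Nq"
  have "\<bar>cov_cr N Q Nq f g\<bar> \<le> ?E (\<lambda>z. \<bar>(f z - ?E f) * (g z - ?E g)\<bar>)"
    unfolding cov_cr_def by (rule abs_expect_cr_le)
  also have "\<dots> \<le> ?E (\<lambda>z. ((f z - ?E f)^2 + (g z - ?E g)^2) / 2)"
    by (rule expect_cr_mono) (rule abs_mult_le_half_sum_squares)
  also have "\<dots> = (cov_cr N Q Nq f f + cov_cr N Q Nq g g) / 2"
    by (simp add: expect_cr_add expect_cr_divide cov_cr_def power2_eq_square)
  finally show ?thesis .
qed

lemma cov_cr_sum: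
  assumes "finite I"
  shows "cov_cr N Q Nq (\<lambda>z. \<Sum>p\<in>I. c p * P p z) (\<lambda>z. \<Sum>p\<in>I. c p * P p z)
       = (\<Sum>p\<in>I. \<Sum>p'\<in>I. c p * c p' * cov_cr N Q Nq (P p) (P p'))"
proof -
  let ?E = "expect_cr N Q Nq"
  have centred: "(\<Sum>p\<in>I. c p * P p z) - ?E (\<lambda>z. \<Sum>p\<in>I. c p * P p z) = (\<Sum>p\<in>I. c p * (P p z - ?E (P p)))"
    for z by (simp add: expect_cr_sum[OF assms] expect_cr_cmult sum_subtractf right_diff_distrib)
  show ?thesis
    unfolding cov_cr_def centred sum_product
    by (simp add: expect_cr_sum[OF assms] expect_cr_cmult[symmetric] mult_ac)
qed

lemma expect_cr_square_le:
  assumes "assignments N Q Nq \<noteq> {}"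
  shows "(expect_cr N Q Nq g)^2 \<le> expect_cr N Q Nq (\<lambda>z. (g z)^2)"
proof -
  define m where "m = expect_cr N Q Nq g"
  have "cov_cr N Q Nq g g = expect_cr N Q Nq (\<lambda>z. (g z)^2 - (2 * m) * g z + m^2)"
    unfolding cov_cr_def m_def[symmetric] by (rule expect_cr_cong) (simp add: power2_eq_square algebra_simps)
  also have "\<dots> = expect_cr N Q Nq (\<lambda>z. (g z)^2) - (2 * m) * m + m^2"
    unfolding expect_cr_add expect_cr_diff expect_cr_cmult expect_cr_const[OF assms] m_def ..
  also have "\<dots> = expect_cr N Q Nq (\<lambda>z. (g z)^2) - m^2" by (simp add: power2_eq_square)
  finally show ?thesis using cov_cr_self_nonneg[of N Q Nq g] by (simp add: m_def)
qed

lemma prob_cr_chebyshev: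
  assumes "t > 0"
  shows "prob_cr N Q Nq (\<lambda>z. t \<le> \<bar>X z - expect_cr N Q Nq X\<bar>) \<le> cov_cr N Q Nq X X / t^2"
proof -
  let ?A = "assignments N Q Nq"
  define m where "m = expect_cr N Q Nq X"
  let ?B = "{z \<in> ?A. t \<le> \<bar>X z - m\<bar>}"
  have "real (card ?B) * t^2 = (\<Sum>z\<in>?B. t^2)" by simp
  also have "\<dots> \<le> (\<Sum>z\<in>?B. (X z - m)^2)"
    using assms by (intro sum_mono) (metis (mono_tags) mem_Collect_eq less_imp_le power2_abs power_mono)
  also have "\<dots> \<le> (\<Sum>z\<in>?A. (X z - m)^2)"
    by (rule sum_mono2[OF finite_assignments]) auto
  finally have "real (card ?B) * t^2 \<le> (\<Sum>z\<in>?A. (X z - m)^2)" .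
  moreover have "cov_cr N Q Nq X X = (\<Sum>z\<in>?A. (X z - m)^2) / card ?A"
    unfolding cov_cr_def m_def power2_eq_square by (rule expect_cr_def)
  ultimately show ?thesis
    using assms unfolding prob_cr_def m_def[symmetric] by (cases "card ?A = 0") (simp_all add: field_simps)
qed

section \<open>Units of the singleton levels\<close>

definition unit_of :: "nat \<Rightarrow> (nat \<Rightarrow> nat) \<Rightarrow> nat \<Rightarrow> nat" where
  "unit_of N z q = (THE i. i < N \<and> z i = q)"

lemma Yobs_eq_unit_of: "Yobs N Y z q = Y (unit_of N z q) q"
  unfolding Yobs_def unit_of_def ..

lemma finite_QU: "finite (QU Q Nq)"
  unfolding QU_def by (rule finite_subset[of _ "{..<Q}"]) auto

lemma ex1_unit_at_level:
  assumes "z \<in> assignments N Q Nq" "q \<in> QU Q Nq"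
  shows "\<exists>!i. i < N \<and> z i = q"
proof -
  have "card {i \<in> {..<N}. z i = q} = 1"
    using assms unfolding assignments_def QU_def by auto
  then obtain i where "{i \<in> {..<N}. z i = q} = {i}" by (rule card_1_singletonE)
  then show ?thesis by (auto simp: set_eq_iff)
qed

lemma unit_of:
  assumes "z \<in> assignments N Q Nq" "q \<in> QU Q Nq"
  shows "unit_of N z q < N" "z (unit_of N z q) = q"
  using theI'[OF ex1_unit_at_level[OF assms]] unfolding unit_of_def by auto

lemma unit_of_eqI:
  assumes "z \<in> assignments N Q Nq" "q \<in> QU Q Nq" "i < N" "z i = q"
  shows "unit_of N z q = i"
  unfolding unit_of_def using ex1_unit_at_level[OF assms(1,2)] assms(3,4) by (simp add: the1_equality)

lemma inj_on_unit_of: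
  assumes "z \<in> assignments N Q Nq"
  shows "inj_on (unit_of N z) (QU Q Nq)"
  using unit_of(2)[OF assms] by (intro inj_onI) metis

lemma card_QU_le:
  assumes "z \<in> assignments N Q Nq"
  shows "card (QU Q Nq) \<le> N"
proof -
  have "unit_of N z ` QU Q Nq \<subseteq> {..<N}" using unit_of(1)[OF assms] by blast
  then show ?thesis using card_inj_on_le[OF inj_on_unit_of[OF assms] _ finite_lessThan] by simp
qed

definition injections :: "nat \<Rightarrow> nat set \<Rightarrow> (nat \<Rightarrow> nat) set" where
  "injections N V = {k \<in> V \<rightarrow>\<^sub>E {..<N}. inj_on k V}"

lemma finite_injections: "finite V \<Longrightarrow> finite (injections N V)"
  unfolding injections_def by (rule finite_subset[of _ "V \<rightarrow>\<^sub>E {..<N}"]) (auto simp: finite_PiE)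

lemma restrict_injections: "k \<in> injections N V \<Longrightarrow> restrict k V = k"
  unfolding injections_def by (blast intro: PiE_restrict)

lemma restrict_unit_of_in_injections:
  assumes "z \<in> assignments N Q Nq" "V \<subseteq> QU Q Nq"
  shows "restrict (unit_of N z) V \<in> injections N V"
  using assms inj_on_subset[OF inj_on_unit_of] unit_of(1) unfolding injections_def by auto

lemma injections_transport:
  assumes "k \<in> injections N V" "k' \<in> injections N V" "finite V"
  obtains \<sigma> where "\<sigma> permutes {..<N}" "\<And>v. v \<in> V \<Longrightarrow> \<sigma> (k v) = k' v"
proof -
  have inj: "inj_on k V" "inj_on k' V" and sub: "k ` V \<subseteq> {..<N}" "k' ` V \<subseteq> {..<N}"
    using assms(1,2) by (auto simp: injections_def)
  have "card ({..<N} - k ` V) = card ({..<N} - k' ` V)"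
    using sub inj by (simp add: card_Diff_subset card_image finite_subset)
  then obtain \<rho> where \<rho>: "bij_betw \<rho> ({..<N} - k ` V) ({..<N} - k' ` V)"
    by (metis finite_Diff finite_lessThan finite_same_card_bij)
  define \<tau> where "\<tau> = k' \<circ> the_inv_into V k"
  have \<tau>: "bij_betw \<tau> (k ` V) (k' ` V)" unfolding \<tau>_def
    using inj by (intro bij_betw_trans[OF bij_betw_the_inv_into]) (auto simp: bij_betw_def)
  define \<sigma> where "\<sigma> i = (if i \<in> k ` V then \<tau> i else \<rho> i)" for i
  have "bij_betw \<sigma> (k ` V \<union> ({..<N} - k ` V)) (k' ` V \<union> ({..<N} - k' ` V))"
  proof (rule bij_betw_combine)
    show "bij_betw \<sigma> (k ` V) (k' ` V)" using \<tau> by (simp add: \<sigma>_def cong: bij_betw_cong)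
    show "bij_betw \<sigma> ({..<N} - k ` V) ({..<N} - k' ` V)" using \<rho> by (subst bij_betw_cong[of _ _ \<rho>]) (auto simp: \<sigma>_def)
  qed auto
  then have "bij_betw \<sigma> {..<N} {..<N}" using sub by (simp add: Un_Diff_cancel Un_absorb1)
  then have "restrict_id \<sigma> {..<N} permutes {..<N}" by (rule permutes_restrict_id)
  moreover have "restrict_id \<sigma> {..<N} (k v) = k' v" if "v \<in> V" for v
    using that sub inj by (auto simp: restrict_id_def \<sigma>_def \<tau>_def the_inv_into_f_f)
  ultimately show thesis by (rule that)
qed

lemma permute_assignment:
  assumes \<sigma>: "\<sigma> permutes {..<N}" and z: "z \<in> assignments N Q Nq"
  shows "z \<circ> inv \<sigma> \<in> assignments N Q Nq"
proof -
  have inv: "inv \<sigma> permutes {..<N}" by (rule permutes_inv[OF \<sigma>])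
  have "{i \<in> {..<N}. (z \<circ> inv \<sigma>) i = q} = \<sigma> ` {i \<in> {..<N}. z i = q}" for q
    using \<sigma> permutes_inverses[OF \<sigma>] permutes_in_image[OF \<sigma>] permutes_in_image[OF inv]
    by (auto simp: image_iff) (metis permutes_inverses(1)[OF \<sigma>])
  moreover have "inj_on \<sigma> A" for A using permutes_inj[OF \<sigma>] by (rule inj_on_subset) simp
  moreover have "z \<circ> inv \<sigma> \<in> {..<N} \<rightarrow>\<^sub>E {..<Q}"
    using z permutes_in_image[OF inv] permutes_not_in[OF inv]
    unfolding assignments_def by (auto simp: PiE_def Pi_def extensional_def)
  ultimately show ?thesis using z unfolding assignments_def by (simp add: card_image)
qed

lemma unit_of_permute_assignment:
  assumes "\<sigma> permutes {..<N}" "z \<in> assignments N Q Nq" "q \<in> QU Q Nq"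
  shows "unit_of N (z \<circ> inv \<sigma>) q = \<sigma> (unit_of N z q)"
  using assms unit_of[OF assms(2,3)] permutes_in_image[OF assms(1), of "unit_of N z q"]
  by (intro unit_of_eqI[OF permute_assignment]) (auto simp: permutes_inverses)

lemma card_unit_of_fibre_le:
  assumes V: "V \<subseteq> QU Q Nq" and k: "k \<in> injections N V" "k' \<in> injections N V"
  shows "card {z \<in> assignments N Q Nq. restrict (unit_of N z) V = k}
       \<le> card {z \<in> assignments N Q Nq. restrict (unit_of N z) V = k'}"
proof -
  obtain \<sigma> where \<sigma>: "\<sigma> permutes {..<N}" and \<sigma>k: "\<And>v. v \<in> V \<Longrightarrow> \<sigma> (k v) = k' v"
    using injections_transport[OF k] finite_subset[OF V finite_QU] by blast
  have "inj_on (\<lambda>z. z \<circ> inv \<sigma>) UNIV"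
    by (metis (no_types, lifting) \<sigma> inj_onI o_assoc o_id permutes_inv_o(2))
  moreover have "(\<lambda>z. z \<circ> inv \<sigma>) ` {z \<in> assignments N Q Nq. restrict (unit_of N z) V = k}
      \<subseteq> {z \<in> assignments N Q Nq. restrict (unit_of N z) V = k'}"
  proof (rule image_subsetI)
    fix z assume "z \<in> {z \<in> assignments N Q Nq. restrict (unit_of N z) V = k}"
    then have z: "z \<in> assignments N Q Nq" and "k = restrict (unit_of N z) V" by auto
    then have "restrict (unit_of N (z \<circ> inv \<sigma>)) V = restrict (\<lambda>v. \<sigma> (k v)) V"
      using V unit_of_permute_assignment[OF \<sigma> z] by (intro restrict_ext) auto
    also have "\<dots> = k'" using \<sigma>k k(2) by (auto simp: injections_def PiE_restrict cong: restrict_cong)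
    finally show "z \<circ> inv \<sigma> \<in> {z \<in> assignments N Q Nq. restrict (unit_of N z) V = k'}"
      using permute_assignment[OF \<sigma> z] by simp
  qed
  ultimately show ?thesis
    by (intro card_inj_on_le[OF inj_on_subset]) (auto simp: finite_assignments)
qed

text \<open>Relabelling the units shows that the units of the singleton levels in V form a
  uniformly distributed injection V \<rightarrow> {..<N}.\<close>

lemma expect_cr_restrict_unit_of:
  assumes V: "V \<subseteq> QU Q Nq" and ne: "assignments N Q Nq \<noteq> {}"
  shows "expect_cr N Q Nq (\<lambda>z. f (restrict (unit_of N z) V))
       = (\<Sum>k\<in>injections N V. f k) / card (injections N V)"
proof -
  let ?A = "assignments N Q Nq" and ?I = "injections N V" and ?r = "\<lambda>z. restrict (unit_of N z) V"
  have fI: "finite ?I" using finite_injections finite_subset[OF V finite_QU] by blast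
  have im: "?r ` ?A \<subseteq> ?I" using restrict_unit_of_in_injections[OF _ V] by blast
  obtain z0 where z0: "z0 \<in> ?A" using ne by blast
  define m where "m = card {z \<in> ?A. ?r z = ?r z0}"
  have fibre: "card {z \<in> ?A. ?r z = k} = m" if "k \<in> ?I" for k
    unfolding m_def using card_unit_of_fibre_le[OF V] that im z0 by (intro antisym) blast+
  have "m > 0" unfolding m_def using finite_assignments z0 by (subst card_gt_0_iff) auto
  have "(\<Sum>z\<in>?A. g (?r z)) = real m * (\<Sum>k\<in>?I. g k)" for g :: "_ \<Rightarrow> real"
  proof -
    have "(\<Sum>z\<in>?A. g (?r z)) = (\<Sum>k\<in>?I. \<Sum>z\<in>{z \<in> ?A. ?r z = k}. g (?r z))"
      by (rule sum.group[OF finite_assignments fI im, symmetric])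
    also have "\<dots> = (\<Sum>k\<in>?I. real m * g k)" by (intro sum.cong) (simp_all add: fibre)
    finally show ?thesis by (simp add: sum_distrib_left)
  qed
  from this[of f] this[of "\<lambda>_. 1"] show ?thesis
    using \<open>m > 0\<close> by (simp add: expect_cr_def)
qed

lemma bij_betw_injections_singleton: "bij_betw (\<lambda>k. k r) (injections N {r}) {..<N}"
proof (rule bij_betw_byWitness[where f' = "\<lambda>i. restrict (\<lambda>_. i) {r}"])
  show "\<forall>k\<in>injections N {r}. restrict (\<lambda>_. k r) {r} = k"
    by (auto simp: injections_def PiE_def extensional_def fun_eq_iff)
  show "(\<lambda>i. restrict (\<lambda>_. i) {r}) ` {..<N} \<subseteq> injections N {r}"
    unfolding injections_def by (intro image_subsetI CollectI conjI) (simp_all only: restrict_PiE_iff, auto)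
qed (auto simp: injections_def)

lemma expect_cr_unit_of:
  assumes "assignments N Q Nq \<noteq> {}" "r \<in> QU Q Nq"
  shows "expect_cr N Q Nq (\<lambda>z. \<phi> (unit_of N z r)) = (\<Sum>i<N. \<phi> i) / N"
proof -
  have "expect_cr N Q Nq (\<lambda>z. \<phi> (unit_of N z r)) = expect_cr N Q Nq (\<lambda>z. \<phi> (restrict (unit_of N z) {r} r))"
    by simp
  also have "\<dots> = (\<Sum>k\<in>injections N {r}. \<phi> (k r)) / card (injections N {r})"
    using assms by (intro expect_cr_restrict_unit_of) auto
  also have "\<dots> = (\<Sum>i<N. \<phi> i) / N"
    using sum.reindex_bij_betw[OF bij_betw_injections_singleton] bij_betw_same_card[OF bij_betw_injections_singleton]
    by (metis card_lessThan)
  finally show ?thesis .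
qed

lemma cov_cr_restrict_unit_of:
  assumes "V \<subseteq> QU Q Nq" "assignments N Q Nq \<noteq> {}" "S \<subseteq> V" "T \<subseteq> V"
  shows "cov_cr N Q Nq (\<lambda>z. f (restrict (unit_of N z) S)) (\<lambda>z. h (restrict (unit_of N z) T))
       = (\<Sum>k\<in>injections N V. (f (restrict k S) - expect_cr N Q Nq (\<lambda>z. f (restrict (unit_of N z) S)))
            * (h (restrict k T) - expect_cr N Q Nq (\<lambda>z. h (restrict (unit_of N z) T))))
         / card (injections N V)"
proof -
  have "V \<inter> S = S" "V \<inter> T = T" using assms(3,4) by auto
  then show ?thesis
    unfolding cov_cr_def
    using expect_cr_restrict_unit_of[OF assms(1,2), of
        "\<lambda>k. (f (restrict k S) - expect_cr N Q Nq (\<lambda>z. f (restrict (unit_of N z) S)))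
           * (h (restrict k T) - expect_cr N Q Nq (\<lambda>z. h (restrict (unit_of N z) T)))"]
    by simp
qed

lemma cov_cr_self_restrict_unit_of:
  assumes "V \<subseteq> QU Q Nq" "assignments N Q Nq \<noteq> {}"
  shows "cov_cr N Q Nq (\<lambda>z. f (restrict (unit_of N z) V)) (\<lambda>z. f (restrict (unit_of N z) V))
       = (\<Sum>k\<in>injections N V. (f k - expect_cr N Q Nq (\<lambda>z. f (restrict (unit_of N z) V)))^2)
         / card (injections N V)"
proof -
  have "(\<Sum>k\<in>injections N V. (f (restrict k V) - expect_cr N Q Nq (\<lambda>z. f (restrict (unit_of N z) V)))
            * (f (restrict k V) - expect_cr N Q Nq (\<lambda>z. f (restrict (unit_of N z) V))))
      = (\<Sum>k\<in>injections N V. (f k - expect_cr N Q Nq (\<lambda>z. f (restrict (unit_of N z) V)))^2)"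
    by (intro sum.cong) (simp_all add: restrict_injections power2_eq_square)
  then show ?thesis using cov_cr_restrict_unit_of[OF assms subset_refl subset_refl, of f f] by simp
qed

lemma sum_injections_centred_eq_0:
  assumes V: "V \<subseteq> QU Q Nq" and ne: "assignments N Q Nq \<noteq> {}"
  shows "(\<Sum>k\<in>injections N V. f k - expect_cr N Q Nq (\<lambda>z. f (restrict (unit_of N z) V))) = 0"
proof -
  obtain z where z: "z \<in> assignments N Q Nq" using ne by blast
  have "finite (injections N V)" using finite_injections finite_subset[OF V finite_QU] by blast
  then have "0 < card (injections N V)"
    using restrict_unit_of_in_injections[OF z V] by (auto simp: card_gt_0_iff)
  then show ?thesis by (simp add: expect_cr_restrict_unit_of[OF V ne] sum_subtractf)
qed

section \<open>Near independence of disjoint sets of units\<close>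

lemma card_injections: "finite V \<Longrightarrow> card (injections N V) = (\<Prod>j\<in>{0..<card V}. N - j)"
  unfolding injections_def using card_inj_on_subset_funcset[of V "{..<N}" V] by simp

lemma card_injections_le: "finite V \<Longrightarrow> card (injections N V) \<le> N ^ card V"
  unfolding card_injections using prod_mono[of "{0..<card V}" "\<lambda>j. N - j" "\<lambda>_. N"] by simp

lemma card_injections_ge:
  assumes "finite V" "card V \<le> 4" "8 \<le> N"
  shows "real N ^ card V / 16 \<le> card (injections N V)"
proof -
  have "real N ^ card V / 16 \<le> real N ^ card V / 2 ^ card V"
    using power_increasing[of "card V" 4 "2::real"] assms(2) by (intro divide_left_mono) auto
  also have "\<dots> = (\<Prod>j\<in>{0..<card V}. real N / 2)" by (simp add: power_divide)
  also have "\<dots> \<le> (\<Prod>j\<in>{0..<card V}. real (N - j))"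
    using assms(2,3) by (intro prod_mono) (auto simp: of_nat_diff)
  finally show ?thesis by (simp add: card_injections[OF assms(1)])
qed

lemma card_injections_pos: "finite V \<Longrightarrow> card V \<le> N \<Longrightarrow> 0 < card (injections N V)"
  by (simp add: card_injections prod_pos)

lemma card_injections_value_le:
  assumes "finite T" "x \<in> T"
  shows "card {b \<in> injections N T. b x = v} \<le> N ^ (card T - 1)"
proof -
  let ?P = "\<Pi>\<^sub>E i\<in>T. if i = x then {v} else {..<N}"
  have "{b \<in> injections N T. b x = v} \<subseteq> ?P"
    unfolding injections_def by (auto simp: PiE_def Pi_def)
  then have "card {b \<in> injections N T. b x = v} \<le> card ?P"
    using assms(1) by (intro card_mono finite_PiE) auto
  also have "\<dots> = (\<Prod>i\<in>T. card (if i = x then {v} else {..<N}))"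
    by (rule card_PiE[OF assms(1)])
  also have "\<dots> = (\<Prod>i\<in>T. if i = x then 1 else N)"
    by (rule prod.cong) auto
  also have "\<dots> = N ^ (card T - 1)"
    using assms by (simp add: prod.remove[OF assms] prod.If_cases)
  finally show ?thesis .
qed

lemma card_colliding_injections_le:
  assumes "finite S" "finite T"
  shows "card {b \<in> injections N T. a ` S \<inter> b ` T \<noteq> {}} \<le> card S * card T * N ^ (card T - 1)"
proof -
  have "{b \<in> injections N T. a ` S \<inter> b ` T \<noteq> {}} = (\<Union>(y, x)\<in>S \<times> T. {b \<in> injections N T. b x = a y})"
    by (auto simp: disjoint_iff) (metis imageI)
  also have "card \<dots> \<le> (\<Sum>(y, x)\<in>S \<times> T. card {b \<in> injections N T. b x = a y})"
    using card_UN_le[of "S \<times> T" "\<lambda>(y, x). {b \<in> injections N T. b x = a y}"] assms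
    by (simp add: prod.case_distrib)
  also have "\<dots> \<le> (\<Sum>(y, x)\<in>S \<times> T. N ^ (card T - 1))"
  proof (rule sum_mono)
    fix p assume "p \<in> S \<times> T"
    then show "(case p of (y, x) \<Rightarrow> card {b \<in> injections N T. b x = a y}) \<le> (case p of (y, x) \<Rightarrow> N ^ (card T - 1))"
      using card_injections_value_le[OF assms(2)] by (auto split: prod.split)
  qed
  finally show ?thesis by (simp add: card_cartesian_product)
qed

lemma bij_betw_injections_Un:
  assumes ST: "S \<inter> T = {}"
  shows "bij_betw (\<lambda>k. (restrict k S, restrict k T)) (injections N (S \<union> T))
           (SIGMA a:injections N S. {b \<in> injections N T. a ` S \<inter> b ` T = {}})"
proof (rule bij_betw_byWitness[where f' = "\<lambda>(a, b). restrict (\<lambda>x. if x \<in> S then a x else b x) (S \<union> T)"])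
  have ext: "k \<in> extensional V" if "k \<in> injections N V" for k V
    using that by (simp add: injections_def PiE_def)
  show "\<forall>k\<in>injections N (S \<union> T). (\<lambda>(a, b). restrict (\<lambda>x. if x \<in> S then a x else b x) (S \<union> T))
          (restrict k S, restrict k T) = k"
    by (auto intro!: extensionalityI[OF restrict_extensional ext])
  show "\<forall>p\<in>SIGMA a:injections N S. {b \<in> injections N T. a ` S \<inter> b ` T = {}}.
          (\<lambda>k. (restrict k S, restrict k T)) ((\<lambda>(a, b). restrict (\<lambda>x. if x \<in> S then a x else b x) (S \<union> T)) p) = p"
    using ST by (auto intro!: extensionalityI[OF restrict_extensional ext])
  show "(\<lambda>k. (restrict k S, restrict k T)) ` injections N (S \<union> T)
          \<subseteq> (SIGMA a:injections N S. {b \<in> injections N T. a ` S \<inter> b ` T = {}})"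
  proof (rule image_subsetI)
    fix k assume "k \<in> injections N (S \<union> T)"
    then have "inj_on k (S \<union> T)" "k \<in> S \<union> T \<rightarrow> {..<N}" by (auto simp: injections_def)
    moreover have "S - T = S" "T - S = T" using ST by auto
    ultimately show "(restrict k S, restrict k T)
        \<in> (SIGMA a:injections N S. {b \<in> injections N T. a ` S \<inter> b ` T = {}})"
      by (auto simp: injections_def inj_on_Un)
  qed
  show "(\<lambda>(a, b). restrict (\<lambda>x. if x \<in> S then a x else b x) (S \<union> T)) `
          (SIGMA a:injections N S. {b \<in> injections N T. a ` S \<inter> b ` T = {}}) \<subseteq> injections N (S \<union> T)"
  proof clarify
    fix a b assume a: "a \<in> injections N S" and b: "b \<in> injections N T" and ab: "a ` S \<inter> b ` T = {}"
    let ?k = "\<lambda>x. if x \<in> S then a x else b x"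
    have "inj_on ?k S" "inj_on ?k T" using a b ST by (auto simp: injections_def inj_on_def)
    moreover have "?k ` S = a ` S" "?k ` T = b ` T" using ST by auto
    moreover have "S - T = S" "T - S = T" using ST by auto
    ultimately have "inj_on ?k (S \<union> T)" using ab by (simp add: inj_on_Un)
    moreover have "?k \<in> S \<union> T \<rightarrow> {..<N}" using a b by (auto simp: injections_def)
    ultimately show "restrict ?k (S \<union> T) \<in> injections N (S \<union> T)"
      by (simp add: injections_def)
  qed
qed

lemma collision_ratio_le:
  assumes fin: "finite S" "finite T" and ST: "S \<inter> T = {}" and ne: "T \<noteq> {}"
    and card: "card S \<le> 2" "card T \<le> 2" and N: "8 \<le> N"
  shows "real (card S * card T * N ^ (card T - 1)) / card (injections N (S \<union> T))
       \<le> 64 / (real N * card (injections N S))"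
proof -
  have card_Un: "card (S \<union> T) = card S + card T" by (rule card_Un_disjoint[OF fin ST])
  obtain t where t: "card T = Suc t" using ne fin by (metis card_0_eq not0_implies_Suc)
  then have pow: "real N ^ (card S + card T) = real N * real N ^ card S * real N ^ (card T - 1)"
    by (simp add: power_add)
  have IS: "0 < real (card (injections N S))" "real (card (injections N S)) \<le> real N ^ card S"
    using card_injections_pos[OF fin(1)] card_injections_le[OF fin(1)] card N
    by (simp_all add: of_nat_le_iff[symmetric])
  have IV: "real N ^ (card S + card T) / 16 \<le> card (injections N (S \<union> T))"
    using card_injections_ge[of "S \<union> T" N] fin card N card_Un by simp
  have "card S * card T \<le> 4" using mult_le_mono[OF card] by simp
  then have st: "real (card S * card T) \<le> 4" by (metis of_nat_le_iff of_nat_numeral)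
  have "real (card S * card T * N ^ (card T - 1)) / card (injections N (S \<union> T))
      \<le> 4 * real N ^ (card T - 1) / (real N ^ (card S + card T) / 16)"
    using IV st N unfolding of_nat_mult of_nat_power by (intro frac_le mult_right_mono) auto
  also have "\<dots> = 64 / (real N * real N ^ card S)"
    using N unfolding pow by (simp add: field_simps)
  also have "\<dots> \<le> 64 / (real N * card (injections N S))"
    using IS N by (intro divide_left_mono mult_left_mono mult_pos_pos) auto
  finally show ?thesis .
qed

lemma sum_injections_Un_eq:
  fixes f h :: "(nat \<Rightarrow> nat) \<Rightarrow> real"
  assumes fin: "finite S" "finite T" and ST: "S \<inter> T = {}" and f0: "(\<Sum>a\<in>injections N S. f a) = 0"
  shows "(\<Sum>k\<in>injections N (S \<union> T). f (restrict k S) * h (restrict k T))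
       = - (\<Sum>a\<in>injections N S. \<Sum>b\<in>{b \<in> injections N T. a ` S \<inter> b ` T \<noteq> {}}. f a * h b)"
proof -
  let ?IS = "injections N S" and ?IT = "injections N T"
  have fI: "finite ?IS" "finite ?IT" using fin by (auto intro: finite_injections)
  have "(\<Sum>k\<in>injections N (S \<union> T). f (restrict k S) * h (restrict k T))
      = (\<Sum>(a, b)\<in>(SIGMA a:?IS. {b \<in> ?IT. a ` S \<inter> b ` T = {}}). f a * h b)"
    using sum.reindex_bij_betw[OF bij_betw_injections_Un[OF ST], of "\<lambda>(a, b). f a * h b"] by simp
  also have "\<dots> = (\<Sum>a\<in>?IS. \<Sum>b\<in>{b \<in> ?IT. a ` S \<inter> b ` T = {}}. f a * h b)"
    using fI by (simp add: sum.Sigma)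
  moreover have "(\<Sum>a\<in>?IS. \<Sum>b\<in>{b \<in> ?IT. a ` S \<inter> b ` T = {}}. f a * h b)
      + (\<Sum>a\<in>?IS. \<Sum>b\<in>{b \<in> ?IT. a ` S \<inter> b ` T \<noteq> {}}. f a * h b) = (\<Sum>a\<in>?IS. f a) * (\<Sum>b\<in>?IT. h b)"
  proof -
    have "(if P then x else 0) + (if \<not> P then x else 0) = (x::real)" for P x by simp
    then show ?thesis using fI by (simp add: sum.inter_filter sum_product flip: sum.distrib)
  qed
  ultimately show ?thesis using f0 by simp
qed

lemma abs_sum_colliding_le:
  fixes f h :: "(nat \<Rightarrow> nat) \<Rightarrow> real"
  assumes fin: "finite S" "finite T"
  shows "\<bar>\<Sum>a\<in>injections N S. \<Sum>b\<in>{b \<in> injections N T. a ` S \<inter> b ` T \<noteq> {}}. f a * h b\<bar>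
       \<le> (real (card S * card T * N ^ (card T - 1)) * (\<Sum>a\<in>injections N S. (f a)^2)
          + real (card T * card S * N ^ (card S - 1)) * (\<Sum>b\<in>injections N T. (h b)^2)) / 2"
proof -
  let ?IS = "injections N S" and ?IT = "injections N T"
  let ?collide = "\<lambda>a b. a ` S \<inter> b ` T \<noteq> {}"
  have fI: "finite ?IS" "finite ?IT" using fin by (auto intro: finite_injections)
  have "\<bar>\<Sum>a\<in>?IS. \<Sum>b\<in>{b \<in> ?IT. ?collide a b}. f a * h b\<bar>
      \<le> (\<Sum>a\<in>?IS. \<Sum>b\<in>{b \<in> ?IT. ?collide a b}. ((f a)^2 + (h b)^2) / 2)"
    by (intro order_trans[OF sum_abs] sum_mono order_trans[OF sum_abs] abs_mult_le_half_sum_squares)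
  also have "\<dots> = ((\<Sum>a\<in>?IS. (f a)^2 * card {b \<in> ?IT. ?collide a b})
                 + (\<Sum>b\<in>?IT. (h b)^2 * card {a \<in> ?IS. ?collide a b})) / 2"
  proof -
    have "(\<Sum>a\<in>?IS. \<Sum>b\<in>{b \<in> ?IT. ?collide a b}. (h b)^2)
        = (\<Sum>b\<in>?IT. \<Sum>a\<in>{a \<in> ?IS. ?collide a b}. (h b)^2)"
      by (rule sum.swap_restrict[OF fI])
    then show ?thesis by (simp add: sum.distrib mult.commute flip: sum_divide_distrib)
  qed
  also have "\<dots> \<le> (real (card S * card T * N ^ (card T - 1)) * (\<Sum>a\<in>?IS. (f a)^2)
                 + real (card T * card S * N ^ (card S - 1)) * (\<Sum>b\<in>?IT. (h b)^2)) / 2"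
  proof -
    have "(\<Sum>a\<in>?IS. (f a)^2 * card {b \<in> ?IT. ?collide a b})
        \<le> real (card S * card T * N ^ (card T - 1)) * (\<Sum>a\<in>?IS. (f a)^2)"
      using card_colliding_injections_le[OF fin, of N] unfolding sum_distrib_left
      by (intro sum_mono) (simp add: mult.commute mult_left_mono del: of_nat_mult of_nat_power)
    moreover have "(\<Sum>b\<in>?IT. (h b)^2 * card {a \<in> ?IS. ?collide a b})
        \<le> real (card T * card S * N ^ (card S - 1)) * (\<Sum>b\<in>?IT. (h b)^2)"
      using card_colliding_injections_le[OF fin(2,1), of N] unfolding sum_distrib_left
      by (intro sum_mono) (simp add: Int_commute mult.commute mult_left_mono del: of_nat_mult of_nat_power)
    ultimately show ?thesis by (intro divide_right_mono add_mono) simp_all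
  qed
  finally show ?thesis .
qed

text \<open>Drawing the units of S \<union> T without replacement differs from drawing those of S and of T
  independently only on colliding pairs, and these make up a fraction O(1/N) of all pairs.\<close>

lemma abs_sum_injections_Un_le:
  fixes f h :: "(nat \<Rightarrow> nat) \<Rightarrow> real"
  assumes fin: "finite S" "finite T" and ST: "S \<inter> T = {}" and ne: "S \<noteq> {}" "T \<noteq> {}"
    and card: "card S \<le> 2" "card T \<le> 2" and N: "8 \<le> N"
    and f0: "(\<Sum>a\<in>injections N S. f a) = 0"
  shows "\<bar>\<Sum>k\<in>injections N (S \<union> T). f (restrict k S) * h (restrict k T)\<bar> / card (injections N (S \<union> T))
       \<le> 32 / real N * ((\<Sum>a\<in>injections N S. (f a)^2) / card (injections N S)
                       + (\<Sum>b\<in>injections N T. (h b)^2) / card (injections N T))"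
proof -
  let ?IS = "injections N S" and ?IT = "injections N T" and ?IV = "injections N (S \<union> T)"
  have halve: "(64 / (n * a) * A + 64 / (n * b) * B) / 2 = 32 / n * (A / a + B / b)" for n a b A B :: real
  proof -
    have "64 / (n * c) * C = 2 * (32 / n * (C / c))" for c C :: real by (simp add: divide_inverse mult_ac)
    then show ?thesis by (simp add: distrib_left)
  qed
  have "\<bar>\<Sum>k\<in>?IV. f (restrict k S) * h (restrict k T)\<bar> / card ?IV
      \<le> (real (card S * card T * N ^ (card T - 1)) / card ?IV * (\<Sum>a\<in>?IS. (f a)^2)
        + real (card T * card S * N ^ (card S - 1)) / card ?IV * (\<Sum>b\<in>?IT. (h b)^2)) / 2"
    using sum_injections_Un_eq[OF fin ST f0, of h] abs_sum_colliding_le[OF fin, where N = N and f = f and h = h]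
      card_injections_pos[of "S \<union> T" N] fin card N card_Un_le[of S T]
    by (simp add: field_simps)
  also have "\<dots> \<le> (64 / (real N * card ?IS) * (\<Sum>a\<in>?IS. (f a)^2)
                 + 64 / (real N * card ?IT) * (\<Sum>b\<in>?IT. (h b)^2)) / 2"
  proof -
    have "T \<inter> S = {}" "T \<union> S = S \<union> T" using ST by auto
    then show ?thesis
      using collision_ratio_le[OF fin ST ne(2) card N] collision_ratio_le[OF fin(2,1) _ ne(1) card(2,1) N]
      by (intro divide_right_mono add_mono mult_right_mono) (simp_all add: sum_nonneg)
  qed
  also have "\<dots> = 32 / real N * ((\<Sum>a\<in>?IS. (f a)^2) / card ?IS + (\<Sum>b\<in>?IT. (h b)^2) / card ?IT)"
    by (rule halve)
  finally show ?thesis .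
qed

lemma abs_cov_cr_disjoint_le:
  fixes f h :: "(nat \<Rightarrow> nat) \<Rightarrow> real"
  assumes ne: "assignments N Q Nq \<noteq> {}"
    and S: "S \<subseteq> QU Q Nq" "S \<noteq> {}" "card S \<le> 2"
    and T: "T \<subseteq> QU Q Nq" "T \<noteq> {}" "card T \<le> 2" and ST: "S \<inter> T = {}"
  defines "F \<equiv> \<lambda>z. f (restrict (unit_of N z) S)" and "H \<equiv> \<lambda>z. h (restrict (unit_of N z) T)"
  shows "\<bar>cov_cr N Q Nq F H\<bar> \<le> 32 / N * (cov_cr N Q Nq F F + cov_cr N Q Nq H H)"
proof (cases "8 \<le> N")
  case False
  obtain z where z: "z \<in> assignments N Q Nq" using ne by blast
  have "finite S" using S(1) finite_QU finite_subset by blast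
  then have "0 < card S" using S(2) by (simp add: card_gt_0_iff)
  also have "card S \<le> N" using card_mono[OF finite_QU S(1)] card_QU_le[OF z] by simp
  finally have "1 / 2 \<le> 32 / real N" using False by (simp add: field_simps)
  then have "(cov_cr N Q Nq F F + cov_cr N Q Nq H H) / 2 \<le> 32 / N * (cov_cr N Q Nq F F + cov_cr N Q Nq H H)"
    using cov_cr_self_nonneg[of N Q Nq F] cov_cr_self_nonneg[of N Q Nq H]
    by (metis add_nonneg_nonneg mult_right_mono mult.commute times_divide_eq_left mult_1)
  then show ?thesis using abs_cov_cr_le[of N Q Nq F H] by linarith
next
  case True
  have fin: "finite S" "finite T" using S(1) T(1) finite_QU finite_subset by blast+
  have "\<bar>cov_cr N Q Nq F H\<bar> = \<bar>\<Sum>k\<in>injections N (S \<union> T). (f (restrict k S) - expect_cr N Q Nq F)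
      * (h (restrict k T) - expect_cr N Q Nq H)\<bar> / card (injections N (S \<union> T))"
    unfolding F_def H_def using S(1) T(1) by (subst cov_cr_restrict_unit_of[OF _ ne]) auto
  also have "\<dots> \<le> 32 / N * (cov_cr N Q Nq F F + cov_cr N Q Nq H H)"
    unfolding F_def H_def cov_cr_self_restrict_unit_of[OF S(1) ne] cov_cr_self_restrict_unit_of[OF T(1) ne]
    by (rule abs_sum_injections_Un_le[OF fin ST S(2) T(2) S(3) T(3) True sum_injections_centred_eq_0[OF S(1) ne]])
  finally show ?thesis .
qed

section \<open>Products of centred observed outcomes\<close>

definition outcome_dev :: "nat \<Rightarrow> (nat \<Rightarrow> nat \<Rightarrow> real) \<Rightarrow> nat \<Rightarrow> nat \<Rightarrow> real" where
  "outcome_dev N Y q i = Y i q - Ybar N Y q"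

text \<open>Below, d r is the deviation of Ybar r from its group average, so that obs_dev is the Z r of
  the header: the observed outcome at level r minus that group average.\<close>

definition obs_dev :: "nat \<Rightarrow> (nat \<Rightarrow> nat \<Rightarrow> real) \<Rightarrow> (nat \<Rightarrow> real) \<Rightarrow> nat \<Rightarrow> (nat \<Rightarrow> nat) \<Rightarrow> real" where
  "obs_dev N Y d r z = d r + outcome_dev N Y r (unit_of N z r)"

lemma expect_cr_outcome_dev_pow4_le:
  assumes "assignments N Q Nq \<noteq> {}" "r \<in> QU Q Nq"
    and "(\<Sum>i<N. (outcome_dev N Y r i)^4) / N \<le> \<Delta>^4"
  shows "expect_cr N Q Nq (\<lambda>z. (outcome_dev N Y r (unit_of N z r))^4) \<le> \<Delta>^4"
  using expect_cr_unit_of[OF assms(1,2), of "\<lambda>i. (outcome_dev N Y r i)^4"] assms(3) by simp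

lemma expect_cr_outcome_dev_pow2_le:
  assumes ne: "assignments N Q Nq \<noteq> {}" and r: "r \<in> QU Q Nq"
    and moment: "(\<Sum>i<N. (outcome_dev N Y r i)^4) / N \<le> \<Delta>^4"
  shows "expect_cr N Q Nq (\<lambda>z. (outcome_dev N Y r (unit_of N z r))^2) \<le> \<Delta>^2"
proof (rule power2_le_imp_le)
  have "(expect_cr N Q Nq (\<lambda>z. (outcome_dev N Y r (unit_of N z r))^2))^2
      \<le> expect_cr N Q Nq (\<lambda>z. (outcome_dev N Y r (unit_of N z r))^4)"
    using expect_cr_square_le[OF ne, of "\<lambda>z. (outcome_dev N Y r (unit_of N z r))^2"] by simp
  also have "\<dots> \<le> (\<Delta>^2)^2" using expect_cr_outcome_dev_pow4_le[OF ne r moment] by simp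
  finally show "(expect_cr N Q Nq (\<lambda>z. (outcome_dev N Y r (unit_of N z r))^2))^2 \<le> (\<Delta>^2)^2" .
qed simp

lemma square_sum3_le: "(a + b + c)^2 \<le> 3 * (a^2 + b^2 + c^2)" for a b c :: real
  using sum_squares_bound[of a b] sum_squares_bound[of b c] sum_squares_bound[of a c]
  by (simp add: power2_eq_square algebra_simps)

lemma square_mult_le: "(a * b)^2 \<le> (a^4 + b^4) / 2" for a b :: real
  using sum_squares_bound[of "a^2" "b^2"] by (simp add: power_mult_distrib flip: power_mult)

lemma cov_cr_obs_dev_product_self_le:
  assumes ne: "assignments N Q Nq \<noteq> {}" and rs: "r \<in> QU Q Nq" "s \<in> QU Q Nq"
    and moment: "\<And>q. q \<in> QU Q Nq \<Longrightarrow> (\<Sum>i<N. (outcome_dev N Y q i)^4) / N \<le> \<Delta>^4"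
    and d: "\<bar>d r\<bar> \<le> \<zeta>" "\<bar>d s\<bar> \<le> \<zeta>"
  defines "P \<equiv> \<lambda>z. obs_dev N Y d r z * obs_dev N Y d s z"
  shows "cov_cr N Q Nq P P \<le> 6 * (\<zeta>^2 * \<Delta>^2 + \<Delta>^4)"
proof -
  let ?E = "expect_cr N Q Nq"
  let ?er = "\<lambda>z. outcome_dev N Y r (unit_of N z r)" and ?es = "\<lambda>z. outcome_dev N Y s (unit_of N z s)"
  have d2: "(d r)^2 \<le> \<zeta>^2" "(d s)^2 \<le> \<zeta>^2" using d by (metis abs_ge_zero power2_abs power_mono)+
  have "cov_cr N Q Nq P P \<le> ?E (\<lambda>z. (P z - d r * d s)^2)" by (rule cov_cr_self_le[OF ne])
  also have "\<dots> \<le> ?E (\<lambda>z. 3 * (\<zeta>^2 * (?es z)^2 + \<zeta>^2 * (?er z)^2 + ((?er z)^4 + (?es z)^4) / 2))"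
  proof (rule expect_cr_mono)
    fix z
    have "(P z - d r * d s)^2 = (d r * ?es z + d s * ?er z + ?er z * ?es z)^2"
      unfolding P_def obs_dev_def by (simp add: algebra_simps)
    also have "\<dots> \<le> 3 * ((d r * ?es z)^2 + (d s * ?er z)^2 + (?er z * ?es z)^2)" by (rule square_sum3_le)
    also have "\<dots> \<le> 3 * (\<zeta>^2 * (?es z)^2 + \<zeta>^2 * (?er z)^2 + ((?er z)^4 + (?es z)^4) / 2)"
      using d2 square_mult_le[of "?er z" "?es z"]
      by (intro mult_left_mono add_mono) (simp_all add: power_mult_distrib mult_right_mono)
    finally show "(P z - d r * d s)^2 \<le> \<dots>" .
  qed
  also have "\<dots> = 3 * (\<zeta>^2 * ?E (\<lambda>z. (?es z)^2) + \<zeta>^2 * ?E (\<lambda>z. (?er z)^2)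
                   + (?E (\<lambda>z. (?er z)^4) + ?E (\<lambda>z. (?es z)^4)) / 2)"
    by (simp add: expect_cr_add expect_cr_cmult expect_cr_divide)
  also have "\<dots> \<le> 3 * (\<zeta>^2 * \<Delta>^2 + \<zeta>^2 * \<Delta>^2 + (\<Delta>^4 + \<Delta>^4) / 2)"
    using expect_cr_outcome_dev_pow2_le[OF ne _ moment] expect_cr_outcome_dev_pow4_le[OF ne _ moment] rs
    by (intro mult_left_mono add_mono divide_right_mono) simp_all
  also have "\<dots> \<le> 6 * (\<zeta>^2 * \<Delta>^2 + \<Delta>^4)" by simp
  finally show ?thesis .
qed

definition index_overlap :: "nat \<times> nat \<Rightarrow> nat \<times> nat \<Rightarrow> real" where
  "index_overlap p p' = of_bool (fst p = fst p') + of_bool (fst p = snd p')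
                      + of_bool (snd p = fst p') + of_bool (snd p = snd p')"

lemma index_overlap_nonneg: "0 \<le> index_overlap p p'"
  by (simp add: index_overlap_def)

lemma abs_cov_cr_obs_dev_products_le:
  assumes ne: "assignments N Q Nq \<noteq> {}" and U: "r \<in> QU Q Nq" "s \<in> QU Q Nq" "t \<in> QU Q Nq" "u \<in> QU Q Nq"
    and moment: "\<And>q. q \<in> QU Q Nq \<Longrightarrow> (\<Sum>i<N. (outcome_dev N Y q i)^4) / N \<le> \<Delta>^4"
    and d: "\<And>q. q \<in> QU Q Nq \<Longrightarrow> \<bar>d q\<bar> \<le> \<zeta>"
  defines "M \<equiv> \<zeta>^2 * \<Delta>^2 + \<Delta>^4"
  shows "\<bar>cov_cr N Q Nq (\<lambda>z. obs_dev N Y d r z * obs_dev N Y d s z) (\<lambda>z. obs_dev N Y d t z * obs_dev N Y d u z)\<bar>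
       \<le> 6 * M * index_overlap (r, s) (t, u) + 384 * M / N"
proof -
  let ?P = "\<lambda>z. obs_dev N Y d r z * obs_dev N Y d s z" and ?P' = "\<lambda>z. obs_dev N Y d t z * obs_dev N Y d u z"
  have var: "cov_cr N Q Nq ?P ?P \<le> 6 * M" "cov_cr N Q Nq ?P' ?P' \<le> 6 * M"
    unfolding M_def
    using cov_cr_obs_dev_product_self_le[OF ne U(1,2) moment d[OF U(1)] d[OF U(2)]]
      cov_cr_obs_dev_product_self_le[OF ne U(3,4) moment d[OF U(3)] d[OF U(4)]] by simp_all
  have M0: "0 \<le> M" unfolding M_def by simp
  show ?thesis
  proof (cases "{r, s} \<inter> {t, u} = {}")
    case False
    then have "1 \<le> index_overlap (r, s) (t, u)" by (auto simp: index_overlap_def)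
    have "\<bar>cov_cr N Q Nq ?P ?P'\<bar> \<le> (cov_cr N Q Nq ?P ?P + cov_cr N Q Nq ?P' ?P') / 2"
      by (rule abs_cov_cr_le)
    also have "\<dots> \<le> (6 * M + 6 * M) / 2"
      using var by (intro divide_right_mono add_mono) simp_all
    also have "\<dots> \<le> 6 * M * index_overlap (r, s) (t, u)"
      using mult_left_mono[OF \<open>1 \<le> index_overlap (r, s) (t, u)\<close>, of "6 * M"] M0 by simp
    also have "\<dots> \<le> 6 * M * index_overlap (r, s) (t, u) + 384 * M / N" using M0 by simp
    finally show ?thesis .
  next
    case True
    let ?f = "\<lambda>q k. d q + outcome_dev N Y q (k q)"
    have cards: "card {r, s} \<le> 2" "card {t, u} \<le> 2" by (simp_all add: card_insert_if)
    have "\<bar>cov_cr N Q Nq ?P ?P'\<bar> \<le> 32 / N * (cov_cr N Q Nq ?P ?P + cov_cr N Q Nq ?P' ?P')"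
      using abs_cov_cr_disjoint_le[OF ne _ _ cards(1) _ _ cards(2) True,
          where f = "\<lambda>k. ?f r k * ?f s k" and h = "\<lambda>k. ?f t k * ?f u k"] U
      unfolding obs_dev_def by simp
    also have "\<dots> \<le> 32 / N * (6 * M + 6 * M)"
      using var by (intro mult_left_mono add_mono) simp_all
    also have "\<dots> \<le> 6 * M * index_overlap (r, s) (t, u) + 384 * M / N"
      using M0 index_overlap_nonneg[of "(r, s)" "(t, u)"] by simp
    finally show ?thesis .
  qed
qed

section \<open>Quadratic forms with bounded row sums\<close>

lemma sum_pairs_indicator_fst:
  fixes W :: "nat \<Rightarrow> nat \<Rightarrow> real"
  assumes "finite U" "x \<in> U"
  shows "(\<Sum>p\<in>U \<times> U. \<bar>W (fst p) (snd p)\<bar> * of_bool (x = fst p)) = (\<Sum>u\<in>U. \<bar>W x u\<bar>)"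
proof -
  have "(\<Sum>p\<in>U \<times> U. \<bar>W (fst p) (snd p)\<bar> * of_bool (x = fst p))
      = (\<Sum>r\<in>U. if x = r then (\<Sum>s\<in>U. \<bar>W r s\<bar>) else 0)"
    by (auto simp: sum.cartesian_product' sum_distrib_right[symmetric] intro!: sum.cong)
  then show ?thesis using assms by simp
qed

lemma sum_pairs_indicator_snd:
  fixes W :: "nat \<Rightarrow> nat \<Rightarrow> real"
  assumes "finite U" "x \<in> U"
  shows "(\<Sum>p\<in>U \<times> U. \<bar>W (fst p) (snd p)\<bar> * of_bool (x = snd p)) = (\<Sum>t\<in>U. \<bar>W t x\<bar>)"
proof -
  have "(\<Sum>p\<in>U \<times> U. \<bar>W (fst p) (snd p)\<bar> * of_bool (x = snd p))
      = (\<Sum>r\<in>U. \<Sum>s\<in>U. if x = s then \<bar>W r s\<bar> else 0)"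
    by (auto simp: sum.cartesian_product' intro!: sum.cong)
  then show ?thesis using assms by simp
qed

lemma sum_abs_pairs_le:
  fixes W :: "nat \<Rightarrow> nat \<Rightarrow> real"
  assumes "finite U" and row: "\<And>r. r \<in> U \<Longrightarrow> (\<Sum>s\<in>U. \<bar>W r s\<bar>) \<le> \<rho>"
  shows "(\<Sum>p\<in>U \<times> U. \<bar>W (fst p) (snd p)\<bar>) \<le> \<rho> * card U"
proof -
  have "(\<Sum>p\<in>U \<times> U. \<bar>W (fst p) (snd p)\<bar>) = (\<Sum>r\<in>U. \<Sum>s\<in>U. \<bar>W r s\<bar>)"
    by (simp add: sum.cartesian_product case_prod_beta)
  also have "\<dots> \<le> (\<Sum>r\<in>U. \<rho>)" by (rule sum_mono) (rule row)
  finally show ?thesis by (simp add: mult.commute)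
qed

lemma sum_abs_pairs_index_overlap_le:
  fixes W :: "nat \<Rightarrow> nat \<Rightarrow> real"
  assumes fin: "finite U" and sym: "\<And>r s. W r s = W s r"
    and row: "\<And>r. r \<in> U \<Longrightarrow> (\<Sum>s\<in>U. \<bar>W r s\<bar>) \<le> \<rho>" and p: "p \<in> U \<times> U"
  shows "(\<Sum>p'\<in>U \<times> U. \<bar>W (fst p') (snd p')\<bar> * index_overlap p p') \<le> 4 * \<rho>"
proof -
  have col: "(\<Sum>t\<in>U. \<bar>W t x\<bar>) \<le> \<rho>" if "x \<in> U" for x using row[OF that] by (simp add: sym)
  have "(\<Sum>p'\<in>U \<times> U. \<bar>W (fst p') (snd p')\<bar> * index_overlap p p')
      = (\<Sum>u\<in>U. \<bar>W (fst p) u\<bar>) + (\<Sum>t\<in>U. \<bar>W t (fst p)\<bar>) + (\<Sum>u\<in>U. \<bar>W (snd p) u\<bar>) + (\<Sum>t\<in>U. \<bar>W t (snd p)\<bar>)"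
    using p fin unfolding index_overlap_def distrib_left sum.distrib
    by (simp only: mem_Times_iff sum_pairs_indicator_fst sum_pairs_indicator_snd)
  also have "\<dots> \<le> \<rho> + \<rho> + \<rho> + \<rho>"
    using p row col by (intro add_mono) (auto simp: mem_Times_iff)
  finally show ?thesis by simp
qed

lemma abs_quadratic_form_le:
  fixes W :: "nat \<Rightarrow> nat \<Rightarrow> real" and C :: "nat \<times> nat \<Rightarrow> nat \<times> nat \<Rightarrow> real"
  assumes fin: "finite U" and sym: "\<And>r s. W r s = W s r"
    and row: "\<And>r. r \<in> U \<Longrightarrow> (\<Sum>s\<in>U. \<bar>W r s\<bar>) \<le> \<rho>"
    and C: "\<And>p p'. p \<in> U \<times> U \<Longrightarrow> p' \<in> U \<times> U \<Longrightarrow> \<bar>C p p'\<bar> \<le> a * index_overlap p p' + b"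
    and a: "0 \<le> a" and b: "0 \<le> b"
  shows "\<bar>\<Sum>p\<in>U \<times> U. \<Sum>p'\<in>U \<times> U. W (fst p) (snd p) * W (fst p') (snd p') * C p p'\<bar>
       \<le> \<rho> * card U * (4 * a * \<rho> + b * (\<rho> * card U))"
proof -
  let ?w = "\<lambda>p. \<bar>W (fst p) (snd p)\<bar>"
  note total = sum_abs_pairs_le[OF fin row]
  have "\<bar>\<Sum>p\<in>U \<times> U. \<Sum>p'\<in>U \<times> U. W (fst p) (snd p) * W (fst p') (snd p') * C p p'\<bar>
      \<le> (\<Sum>p\<in>U \<times> U. \<Sum>p'\<in>U \<times> U. ?w p * ?w p' * (a * index_overlap p p' + b))"
    by (intro order_trans[OF sum_abs] sum_mono order_trans[OF sum_abs])
      (simp add: abs_mult C mult_left_mono)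
  also have "\<dots> = (\<Sum>p\<in>U \<times> U. ?w p * (a * (\<Sum>p'\<in>U \<times> U. ?w p' * index_overlap p p') + b * (\<Sum>p'\<in>U \<times> U. ?w p')))"
    by (simp add: sum_distrib_left sum.distrib algebra_simps)
  also have "\<dots> \<le> (\<Sum>p\<in>U \<times> U. ?w p * (4 * a * \<rho> + b * (\<rho> * card U)))"
  proof (rule sum_mono)
    fix p assume p: "p \<in> U \<times> U"
    have "a * (\<Sum>p'\<in>U \<times> U. ?w p' * index_overlap p p') \<le> a * (4 * \<rho>)"
      using sum_abs_pairs_index_overlap_le[OF fin sym row p] a by (rule mult_left_mono)
    moreover have "b * (\<Sum>p'\<in>U \<times> U. ?w p') \<le> b * (\<rho> * card U)" using total b by (rule mult_left_mono)
    ultimately show "?w p * (a * (\<Sum>p'\<in>U \<times> U. ?w p' * index_overlap p p') + b * (\<Sum>p'\<in>U \<times> U. ?w p'))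
        \<le> ?w p * (4 * a * \<rho> + b * (\<rho> * card U))"
      by (intro mult_left_mono) (simp_all add: mult.left_commute)
  qed
  also have "\<dots> = (\<Sum>p\<in>U \<times> U. ?w p) * (4 * a * \<rho> + b * (\<rho> * card U))"
    by (simp add: sum_distrib_right)
  also have "\<dots> \<le> \<rho> * card U * (4 * a * \<rho> + b * (\<rho> * card U))"
  proof (cases "U = {}")
    case False
    then obtain r where r: "r \<in> U" by blast
    have "0 \<le> (\<Sum>s\<in>U. \<bar>W r s\<bar>)" by (rule sum_nonneg) simp
    then have "0 \<le> \<rho>" using row[OF r] by linarith
    then show ?thesis using a b by (intro mult_right_mono[OF total] add_nonneg_nonneg mult_nonneg_nonneg) simp_all
  qed simp
  finally show ?thesis .
qed

section \<open>The grouped variance estimator\<close>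

definition centring_coeff :: "nat set \<Rightarrow> nat \<Rightarrow> nat \<Rightarrow> real" where
  "centring_coeff S q r = of_bool (q = r) - 1 / card S"

lemma centring_coeff_commute: "centring_coeff S q r = centring_coeff S r q"
  by (simp add: centring_coeff_def eq_commute)

lemma sum_abs_centring_coeff_le:
  assumes "finite S" "S \<noteq> {}"
  shows "(\<Sum>r\<in>S. \<bar>centring_coeff S q r\<bar>) \<le> 2"
proof -
  have "(\<Sum>r\<in>S. \<bar>centring_coeff S q r\<bar>) \<le> (\<Sum>r\<in>S. of_bool (q = r) + 1 / card S)"
    by (intro sum_mono) (simp add: centring_coeff_def abs_diff_le_iff)
  also have "\<dots> = of_bool (q \<in> S) + 1"
    using assms by (simp add: sum.distrib of_bool_def)
  finally show ?thesis by (cases "q \<in> S") simp_all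
qed

lemma dev_from_mean_eq_sum_centring_coeff:
  fixes y :: "nat \<Rightarrow> real"
  assumes "finite S" "S \<noteq> {}" "q \<in> S"
  shows "y q - (\<Sum>r\<in>S. y r) / card S = (\<Sum>r\<in>S. centring_coeff S q r * (y r - m))"
proof -
  have "(\<Sum>r\<in>S. centring_coeff S q r * (y r - m))
      = (\<Sum>r\<in>S. of_bool (q = r) * (y r - m)) - (\<Sum>r\<in>S. (y r - m) / card S)"
    by (simp add: centring_coeff_def left_diff_distrib sum_subtractf)
  also have "\<dots> = (y q - m) - (\<Sum>r\<in>S. y r - m) / card S"
  proof -
    have "of_bool (q = r) * x = (if q = r then x else 0)" for r and x :: real by simp
    then show ?thesis using assms by (simp add: sum_divide_distrib)
  qed
  also have "\<dots> = y q - (\<Sum>r\<in>S. y r) / card S"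
    using assms by (simp add: sum_subtractf field_simps)
  finally show ?thesis by simp
qed

lemma weighted_sum_sq_dev_eq:
  fixes y w :: "nat \<Rightarrow> real"
  assumes "finite S" "S \<noteq> {}"
  shows "(\<Sum>q\<in>S. w q * (y q - (\<Sum>r\<in>S. y r) / card S)^2)
       = (\<Sum>r\<in>S. \<Sum>s\<in>S. (\<Sum>q\<in>S. w q * centring_coeff S q r * centring_coeff S q s) * ((y r - m) * (y s - m)))"
proof -
  have "(\<Sum>q\<in>S. w q * (y q - (\<Sum>r\<in>S. y r) / card S)^2)
      = (\<Sum>q\<in>S. w q * ((\<Sum>r\<in>S. centring_coeff S q r * (y r - m)) * (\<Sum>s\<in>S. centring_coeff S q s * (y s - m))))"
    using assms by (intro sum.cong) (simp_all add: dev_from_mean_eq_sum_centring_coeff[of S _ y m] power2_eq_square)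
  also have "\<dots> = (\<Sum>q\<in>S. \<Sum>r\<in>S. \<Sum>s\<in>S. w q * centring_coeff S q r * centring_coeff S q s * ((y r - m) * (y s - m)))"
  proof (intro sum.cong refl)
    fix q
    have "w q * ((\<Sum>r\<in>S. centring_coeff S q r * (y r - m)) * (\<Sum>s\<in>S. centring_coeff S q s * (y s - m)))
        = (\<Sum>r\<in>S. \<Sum>s\<in>S. w q * (centring_coeff S q r * (y r - m) * (centring_coeff S q s * (y s - m))))"
      unfolding sum_product by (simp add: sum_distrib_left)
    then show "w q * ((\<Sum>r\<in>S. centring_coeff S q r * (y r - m)) * (\<Sum>s\<in>S. centring_coeff S q s * (y s - m)))
        = (\<Sum>r\<in>S. \<Sum>s\<in>S. w q * centring_coeff S q r * centring_coeff S q s * ((y r - m) * (y s - m)))"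
      by (simp add: mult_ac)
  qed
  also have "\<dots> = (\<Sum>r\<in>S. \<Sum>s\<in>S. \<Sum>q\<in>S. w q * centring_coeff S q r * centring_coeff S q s * ((y r - m) * (y s - m)))"
    by (subst sum.swap) (rule sum.cong[OF refl], rule sum.swap)
  finally show ?thesis by (simp add: sum_distrib_right)
qed

locale grouping =
  fixes G :: nat and grp :: "nat \<Rightarrow> nat set" and U :: "nat set"
  assumes Union_grp: "(\<Union>g<G. grp g) = U" and finite_U: "finite U"
    and disjoint_grp: "\<And>g g'. g < G \<Longrightarrow> g' < G \<Longrightarrow> g \<noteq> g' \<Longrightarrow> grp g \<inter> grp g' = {}"
    and card_grp: "\<And>g. g < G \<Longrightarrow> 2 \<le> card (grp g)"
begin

lemma grp_subset: "g < G \<Longrightarrow> grp g \<subseteq> U"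
  using Union_grp by blast

lemma finite_grp: "g < G \<Longrightarrow> finite (grp g)"
  using finite_subset[OF grp_subset finite_U] .

lemma grp_nonempty: "g < G \<Longrightarrow> grp g \<noteq> {}"
  using card_grp[of g] by auto

definition group_of :: "nat \<Rightarrow> nat" where
  "group_of r = (THE g. g < G \<and> r \<in> grp g)"

lemma group_of_eq: "g < G \<Longrightarrow> r \<in> grp g \<Longrightarrow> group_of r = g"
  unfolding group_of_def using disjoint_grp by (intro the_equality) blast+

lemma group_of: "r \<in> U \<Longrightarrow> group_of r < G \<and> r \<in> grp (group_of r)"
  using Union_grp group_of_eq by blast

definition vhat_coeff :: "(nat \<Rightarrow> real) \<Rightarrow> nat \<Rightarrow> nat \<Rightarrow> real" where
  "vhat_coeff w r s = (if group_of r = group_of s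
     then (\<Sum>q\<in>grp (group_of r). w q * centring_coeff (grp (group_of r)) q r * centring_coeff (grp (group_of r)) q s)
     else 0)"

lemma vhat_coeff_eq_0:
  assumes "g < G" "r \<in> grp g" "s \<in> U" "s \<notin> grp g"
  shows "vhat_coeff w r s = 0"
proof -
  have "group_of s \<noteq> g" using group_of[OF assms(3)] assms(4) by auto
  then show ?thesis by (simp add: vhat_coeff_def group_of_eq[OF assms(1,2)])
qed

lemma vhat_coeff_commute: "vhat_coeff w r s = vhat_coeff w s r"
  by (simp add: vhat_coeff_def mult_ac)

lemma sum_abs_vhat_coeff_le:
  assumes w: "\<forall>q\<in>U. \<bar>w q\<bar> \<le> wbar" and r: "r \<in> U"
  shows "(\<Sum>s\<in>U. \<bar>vhat_coeff w r s\<bar>) \<le> 4 * wbar"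
proof -
  define g where "g = group_of r"
  let ?S = "grp g" and ?c = "centring_coeff (grp g)"
  have g: "g < G" "r \<in> ?S" using group_of[OF r] by (simp_all add: g_def)
  have wbar: "0 \<le> wbar" using w r by force
  have "(\<Sum>s\<in>U. \<bar>vhat_coeff w r s\<bar>) = (\<Sum>s\<in>?S. \<bar>vhat_coeff w r s\<bar>)"
    using vhat_coeff_eq_0[OF g] by (intro sum.mono_neutral_right[OF finite_U grp_subset[OF g(1)]]) simp_all
  also have "\<dots> \<le> (\<Sum>s\<in>?S. \<Sum>q\<in>?S. wbar * (\<bar>?c q r\<bar> * \<bar>?c q s\<bar>))"
  proof (rule sum_mono)
    fix s assume s: "s \<in> ?S"
    have "vhat_coeff w r s = (\<Sum>q\<in>?S. w q * ?c q r * ?c q s)"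
      using group_of_eq[OF g(1) s] by (simp add: vhat_coeff_def g_def)
    then have "\<bar>vhat_coeff w r s\<bar> \<le> (\<Sum>q\<in>?S. \<bar>w q\<bar> * (\<bar>?c q r\<bar> * \<bar>?c q s\<bar>))"
      using sum_abs[of "\<lambda>q. w q * ?c q r * ?c q s" ?S] by (simp add: abs_mult mult.assoc)
    also have "\<dots> \<le> (\<Sum>q\<in>?S. wbar * (\<bar>?c q r\<bar> * \<bar>?c q s\<bar>))"
      using w grp_subset[OF g(1)] by (intro sum_mono mult_right_mono) auto
    finally show "\<bar>vhat_coeff w r s\<bar> \<le> \<dots>" .
  qed
  also have "\<dots> = wbar * (\<Sum>q\<in>?S. \<bar>?c q r\<bar> * (\<Sum>s\<in>?S. \<bar>?c q s\<bar>))"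
    by (subst sum.swap) (simp add: sum_distrib_left)
  also have "\<dots> \<le> wbar * (\<Sum>q\<in>?S. \<bar>?c r q\<bar> * 2)"
    using sum_abs_centring_coeff_le[OF finite_grp[OF g(1)] grp_nonempty[OF g(1)]] wbar
    by (intro mult_left_mono sum_mono) (simp_all add: centring_coeff_commute mult_left_mono)
  also have "\<dots> \<le> wbar * (2 * 2)"
    using sum_abs_centring_coeff_le[OF finite_grp[OF g(1)] grp_nonempty[OF g(1)]] wbar
    by (intro mult_left_mono) (simp_all add: sum_distrib_right[symmetric])
  finally show ?thesis by simp
qed

definition group_mean_dev :: "nat \<Rightarrow> (nat \<Rightarrow> nat \<Rightarrow> real) \<Rightarrow> nat \<Rightarrow> real" where
  "group_mean_dev N Y r = Ybar N Y r - Ybar_grp N Y (grp (group_of r))"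

lemma obs_dev_group_mean_dev:
  "obs_dev N Y (group_mean_dev N Y) r z = Yobs N Y z r - Ybar_grp N Y (grp (group_of r))"
  by (simp add: obs_dev_def outcome_dev_def group_mean_dev_def Yobs_eq_unit_of)

lemma vhat_eq_quadratic_form:
  "vhat N Y G grp w z = (\<Sum>p\<in>U \<times> U. vhat_coeff w (fst p) (snd p)
      * (obs_dev N Y (group_mean_dev N Y) (fst p) z * obs_dev N Y (group_mean_dev N Y) (snd p) z))"
proof -
  let ?Z = "\<lambda>r. obs_dev N Y (group_mean_dev N Y) r z"
  have group: "(\<Sum>q\<in>grp g. w q * (Yobs N Y z q - Yhat_grp N Y z (grp g))^2)
      = (\<Sum>r\<in>grp g. \<Sum>s\<in>U. vhat_coeff w r s * (?Z r * ?Z s))" if g: "g < G" for g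
  proof -
    have "(\<Sum>q\<in>grp g. w q * (Yobs N Y z q - Yhat_grp N Y z (grp g))^2)
        = (\<Sum>r\<in>grp g. \<Sum>s\<in>grp g. vhat_coeff w r s * (?Z r * ?Z s))"
      unfolding Yhat_grp_def
      using weighted_sum_sq_dev_eq[OF finite_grp[OF g] grp_nonempty[OF g], of w "Yobs N Y z" "Ybar_grp N Y (grp g)"]
      by (simp add: vhat_coeff_def obs_dev_group_mean_dev group_of_eq[OF g] cong: sum.cong)
    also have "\<dots> = (\<Sum>r\<in>grp g. \<Sum>s\<in>U. vhat_coeff w r s * (?Z r * ?Z s))"
      using vhat_coeff_eq_0[OF g] by (intro sum.cong refl sum.mono_neutral_left[OF finite_U grp_subset[OF g]]) simp_all
    finally show ?thesis .
  qed
  have "vhat N Y G grp w z = (\<Sum>g<G. \<Sum>r\<in>grp g. \<Sum>s\<in>U. vhat_coeff w r s * (?Z r * ?Z s))"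
    unfolding vhat_def by (simp add: group)
  also have "\<dots> = (\<Sum>r\<in>U. \<Sum>s\<in>U. vhat_coeff w r s * (?Z r * ?Z s))"
    unfolding Union_grp[symmetric] using finite_grp disjoint_grp by (intro sum.UNION_disjoint[symmetric]) auto
  finally show ?thesis by (simp add: sum.cartesian_product case_prod_beta)
qed

end

lemma variance_bound_arith:
  fixes w M n N :: real
  assumes "0 \<le> M" "0 \<le> n" "n \<le> N"
  shows "4 * w * n * (4 * (6 * M) * (4 * w) + 384 * M / N * (4 * w * n)) \<le> 6528 * w^2 * M * n"
proof -
  have "n * n / N \<le> n" using assms(2,3) by (cases "N = 0") (simp_all add: field_simps mult_right_mono)
  then have "6144 * w^2 * M * (n * n / N) \<le> 6144 * w^2 * M * n"
    using assms(1) by (intro mult_left_mono) simp_all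
  then show ?thesis by (simp add: power2_eq_square algebra_simps)
qed

context grouping
begin

lemma cov_cr_vhat_le:
  assumes U: "U = QU Q Nq" and ne: "assignments N Q Nq \<noteq> {}"
    and moment: "\<forall>q<Q. (\<Sum>i<N. (Y i q - Ybar N Y q)^4) / real N \<le> \<Delta>^4"
    and dev: "\<forall>g<G. \<forall>q\<in>grp g. \<bar>Ybar N Y q - Ybar_grp N Y (grp g)\<bar> \<le> \<zeta>"
    and w: "\<forall>q\<in>U. \<bar>w q\<bar> \<le> wbar"
  shows "cov_cr N Q Nq (vhat N Y G grp w) (vhat N Y G grp w)
       \<le> 6528 * wbar^2 * (\<Delta>^4 + \<Delta>^2 * \<zeta>^2) * card U"
proof -
  define M where "M = \<zeta>^2 * \<Delta>^2 + \<Delta>^4"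
  let ?B = "\<lambda>p. vhat_coeff w (fst p) (snd p)"
  let ?P = "\<lambda>p z. obs_dev N Y (group_mean_dev N Y) (fst p) z * obs_dev N Y (group_mean_dev N Y) (snd p) z"
  have moment': "(\<Sum>i<N. (outcome_dev N Y q i)^4) / N \<le> \<Delta>^4" if "q \<in> QU Q Nq" for q
    using moment that by (simp add: QU_def outcome_dev_def)
  have d: "\<bar>group_mean_dev N Y q\<bar> \<le> \<zeta>" if "q \<in> QU Q Nq" for q
    using dev group_of[of q] that U by (simp add: group_mean_dev_def)
  have "vhat N Y G grp w = (\<lambda>z. \<Sum>p\<in>U \<times> U. ?B p * ?P p z)"
    by (rule ext) (rule vhat_eq_quadratic_form)
  then have "cov_cr N Q Nq (vhat N Y G grp w) (vhat N Y G grp w)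
      = (\<Sum>p\<in>U \<times> U. \<Sum>p'\<in>U \<times> U. ?B p * ?B p' * cov_cr N Q Nq (?P p) (?P p'))"
    using finite_U by (simp add: cov_cr_sum)
  also have "\<dots> \<le> 4 * wbar * card U * (4 * (6 * M) * (4 * wbar) + 384 * M / N * (4 * wbar * card U))"
    using abs_cov_cr_obs_dev_products_le[OF ne _ _ _ _ moment' d] U finite_U M_def
      sum_abs_vhat_coeff_le[OF w] vhat_coeff_commute
    by (intro order_trans[OF abs_ge_self abs_quadratic_form_le]) (auto simp: mem_Times_iff mult.assoc)
  also have "\<dots> \<le> 6528 * wbar^2 * M * card U"
    using card_QU_le ne U by (intro variance_bound_arith) (auto simp: M_def)
  finally show ?thesis by (simp add: M_def ac_simps)
qed

end

lemma prob_cr_vhat_deviation_le: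
  assumes Union: "(\<Union>g<G. grp g) = QU Q Nq"
    and disjoint: "\<forall>g<G. \<forall>g'<G. g \<noteq> g' \<longrightarrow> grp g \<inter> grp g' = {}" and card: "\<forall>g<G. card (grp g) \<ge> 2"
    and moment: "\<forall>q<Q. (\<Sum>i<N. (Y i q - Ybar N Y q)^4) / real N \<le> \<Delta>^4"
    and dev: "\<forall>g<G. \<forall>q\<in>grp g. \<bar>Ybar N Y q - Ybar_grp N Y (grp g)\<bar> \<le> \<zeta>"
    and w: "\<forall>q\<in>QU Q Nq. \<bar>w q\<bar> \<le> wbar" and t: "t > 0"
  shows "prob_cr N Q Nq (\<lambda>z. \<bar>vhat N Y G grp w z - expect_cr N Q Nq (vhat N Y G grp w)\<bar> \<ge> t)
       \<le> 6528 * wbar^2 * (\<Delta>^4 + \<Delta>^2 * \<zeta>^2) * real (card (QU Q Nq)) / t^2"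
proof (cases "assignments N Q Nq = {}")
  case True
  then show ?thesis by (simp add: prob_cr_def)
next
  case False
  interpret grouping G grp "QU Q Nq"
    using Union disjoint card finite_QU by unfold_locales auto
  show ?thesis
    using prob_cr_chebyshev[OF t, of N Q Nq "vhat N Y G grp w"] cov_cr_vhat_le[OF refl False moment dev w] t
    by (auto simp: divide_right_mono intro: order_trans)
qed

theorem lemmaS14:
  shows "\<exists>C>0. \<forall>(N::nat) (Q::nat) (Nq::nat \<Rightarrow> nat) (Y::nat \<Rightarrow> nat \<Rightarrow> real)
      (G::nat) (grp::nat \<Rightarrow> nat set) (w::nat \<Rightarrow> real) (wbar::real) (\<Delta>::real) (\<zeta>::real) (t::real).
    (\<forall>q<Q. Nq q \<ge> 1) \<and> (\<Sum>q<Q. Nq q) = N \<and>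
    (\<Union>g<G. grp g) = QU Q Nq \<and>
    (\<forall>g<G. \<forall>g'<G. g \<noteq> g' \<longrightarrow> grp g \<inter> grp g' = {}) \<and>
    (\<forall>g<G. card (grp g) \<ge> 2) \<and>
    (\<forall>q<Q. (\<Sum>i<N. (Y i q - Ybar N Y q)^4) / real N \<le> \<Delta>^4) \<and>
    (\<forall>g<G. \<forall>q\<in>grp g. \<bar>Ybar N Y q - Ybar_grp N Y (grp g)\<bar> \<le> \<zeta>) \<and>
    (\<forall>q\<in>QU Q Nq. \<bar>w q\<bar> \<le> wbar) \<and> t > 0
    \<longrightarrow> prob_cr N Q Nq (\<lambda>z. \<bar>vhat N Y G grp w z - expect_cr N Q Nq (vhat N Y G grp w)\<bar> \<ge> t)
        \<le> C * wbar^2 * (\<Delta>^4 + \<Delta>^2 * \<zeta>^2) * real (card (QU Q Nq)) / t^2"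
  by (intro exI[of _ 6528] conjI allI impI, simp, elim conjE) (rule prob_cr_vhat_deviation_le)

end
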